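(* Let $(\tilde S,\tilde g)$ and $(\tilde T,\tilde f)$ be lifted partial permutations with $\tilde T=\tilde g(\tilde S)$. If $\mathrm{cr}(\tilde f\circ\tilde g)=\mathrm{cr}(\tilde f)+\mathrm{cr}(\tilde g)$, then $w_1(\tilde f\circ\tilde g)=w_1(\tilde f)+w_1(\tilde g)$ and $w_m(\tilde f\circ\tilde g)=w_m(\tilde f)+w_m(\tilde g)$.
   Context: Fix integers $0<k<m$. For $t\in\frac12\mathbb Z$ let $r_t(x)=2t-x$, and let $G_m$ be the group of isometries of $\mathbb R$ generated by $r_{1/2}$ and $r_{m-1/2}$; it acts on $\mathbb Z$ with $\mathbb Z/G_m\cong\{1,\dots,m-1\}$. A lifted partial permutation on $k$ letters is a pair $(\tilde S,\tilde f)$ with $\tilde S\subset\mathbb Z$ $G_m$-invariant, $|\tilde S/G_m|=k$, and $\tilde f:\tilde S\to\mathbb Z$ $G_m$-equivariant such that the induced map $\tilde S/G_m\to\mathbb Z/G_m$ is injective. Weight vector: $w_j(\tilde f)=\tfrac12\#\{i\in\tilde S: i<j-\tfrac12<\tilde f(i)\text{ or } i>j-\tfrac12>\tilde f(i)\}$ for $j=1,\dots,m$. A crossing of $\tilde f$ is a class $\langle i,j\rangle$ of pairs $i<j$ in $\tilde S$ with $\tilde f(i)>\tilde f(j)$, modulo $(i,j)\sim(i',j')$ iff $\{gi,gj\}=\{i',j'\}$ for some $g\in G_m$; $\mathrm{cr}(\tilde f)$ is the number of crossings. If $\tilde T=\tilde g(\tilde S)$ then $(\tilde S,\tilde f\circ\tilde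 g)$ is a lifted partial permutation. *)

theory Defs
  imports Complex_Main
begin

text \<open>Reflection r_t(x) = 2t - x on the integers, for t in (1/2)Z; we index by 2t.
  r_{1/2} = refl 1, r_{m-1/2} = refl (2m-1).\<close>
definition refl2 :: "int \<Rightarrow> int \<Rightarrow> int" where
  "refl2 s x = s - x"

text \<open>G_m: the group generated by r_{1/2} and r_{m-1/2} (both involutions, so
  closure of the identity under left composition with the generators).\<close>
inductive_set Gm :: "nat \<Rightarrow> (int \<Rightarrow> int) set" for m :: nat where
  Gm_id: "id \<in> Gm m"
| Gm_r1: "g \<in> Gm m \<Longrightarrow> refl2 1 \<circ> g \<in> Gm m"
| Gm_r2: "g \<in> Gm m \<Longrightarrow> refl2 (2 * int m - 1) \<circ> g \<in> Gm m"

definition orbit :: "nat \<Rightarrow> int \<Rightarrow> int set" where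
  "orbit m x = {g x | g. g \<in> Gm m}"

definition lpp :: "nat \<Rightarrow> nat \<Rightarrow> int set \<Rightarrow> (int \<Rightarrow> int) \<Rightarrow> bool" where
  "lpp m k S f \<longleftrightarrow>
     (\<forall>g\<in>Gm m. \<forall>x\<in>S. g x \<in> S) \<and>
     card (orbit m ` S) = k \<and> finite (orbit m ` S) \<and>
     (\<forall>g\<in>Gm m. \<forall>x\<in>S. f (g x) = g (f x)) \<and>
     (\<forall>x\<in>S. \<forall>y\<in>S. orbit m (f x) = orbit m (f y) \<longrightarrow> orbit m x = orbit m y)"

definition weight :: "int set \<Rightarrow> (int \<Rightarrow> int) \<Rightarrow> int \<Rightarrow> real" where
  "weight S f j = card {i \<in> S. (real_of_int i < real_of_int j - 1/2 \<and> real_of_int j - 1/2 < real_of_int (f i))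
                          \<or> (real_of_int i > real_of_int j - 1/2 \<and> real_of_int j - 1/2 > real_of_int (f i))} / 2"

definition crossing_pairs :: "int set \<Rightarrow> (int \<Rightarrow> int) \<Rightarrow> (int \<times> int) set" where
  "crossing_pairs S f = {(i, j). i \<in> S \<and> j \<in> S \<and> i < j \<and> f i > f j}"

definition pair_rel :: "nat \<Rightarrow> (int \<times> int) set \<Rightarrow> ((int \<times> int) \<times> (int \<times> int)) set" where
  "pair_rel m P = {((i, j), (i', j')). (i, j) \<in> P \<and> (i', j') \<in> P \<and>
                      (\<exists>g\<in>Gm m. {g i, g j} = {i', j'})}"

definition cr :: "nat \<Rightarrow> int set \<Rightarrow> (int \<Rightarrow> int) \<Rightarrow> nat" where
  "cr m S f = card (crossing_pairs S f // pair_rel m (crossing_pairs S f))"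

end

theory Submission
  imports Defs
begin

text \<open>A crossing of
  \<open>f \<circ> g\<close> is either a crossing of \<open>g\<close>, or its image under \<open>g\<close> is a crossing of \<open>f\<close>; both
  assignments are injective on classes, so \<open>cr(f \<circ> g) \<le> cr f + cr g\<close>, and the inequality
  is strict as soon as some crossing of \<open>g\<close> is undone in \<open>f \<circ> g\<close>. Hence equality means that
  every crossing of \<open>g\<close> survives in \<open>f \<circ> g\<close>.

  The weight \<open>w\<^sub>j\<close> counts the strands crossing the line through \<open>j - 1/2\<close>, and for \<open>j = 1\<close>
  and \<open>j = m\<close> this line is the axis of a generating reflection \<open>r\<close> of \<open>G\<^sub>m\<close>. If the strand
  of \<open>i\<close> crossed it under \<open>g\<close> and back under \<open>f\<close>, then (after possibly replacing \<open>i\<close> by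
  \<open>r i\<close>) the pair \<open>i, r i\<close> would be a crossing of \<open>g\<close> undone in \<open>f \<circ> g\<close>. So no strand
  crosses the line twice, and the crossing strands of \<open>f \<circ> g\<close> are those of \<open>g\<close> together
  with the \<open>g\<close>-preimages of those of \<open>f\<close>.\<close>

lemma card_image_le_if_factors:
  assumes "finite (f ` A)" and "\<And>a b. a \<in> A \<Longrightarrow> b \<in> A \<Longrightarrow> f a = f b \<Longrightarrow> h a = h b"
  shows "card (h ` A) \<le> card (f ` A)"
proof -
  have "h ` A = (\<lambda>y. h (inv_into A f y)) ` f ` A"
    unfolding image_image
  proof (rule image_cong)
    fix a assume a: "a \<in> A"
    have "inv_into A f (f a) \<in> A" "f (inv_into A f (f a)) = f a"
      using a by (simp_all add: inv_into_into f_inv_into_f)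
    then show "h a = h (inv_into A f (f a))" using assms(2)[OF a] by simp
  qed simp
  then show ?thesis using assms(1) by (simp add: card_image_le)
qed

lemma quotient_eq_image: "A // r = (\<lambda>x. r `` {x}) ` A"
  by (auto simp: quotient_def)

lemma Gm_normal_form:
  assumes "h \<in> Gm m"
  shows "\<exists>c. h = (\<lambda>x. x + 2 * c * (int m - 1)) \<or> h = (\<lambda>x. 2 * c * (int m - 1) + 1 - x)"
  using assms
proof induction
  case Gm_id
  show ?case by (intro exI[of _ 0]) auto
next
  case (Gm_r1 g)
  then obtain c where "g = (\<lambda>x. x + 2 * c * (int m - 1)) \<or> g = (\<lambda>x. 2 * c * (int m - 1) + 1 - x)"
    by blast
  then show ?case
    by (intro exI[of _ "- c"]) (auto simp: refl2_def fun_eq_iff algebra_simps)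
next
  case (Gm_r2 g)
  then obtain c where "g = (\<lambda>x. x + 2 * c * (int m - 1)) \<or> g = (\<lambda>x. 2 * c * (int m - 1) + 1 - x)"
    by blast
  then show ?case
    by (intro exI[of _ "1 - c"]) (auto simp: refl2_def fun_eq_iff algebra_simps)
qed

lemma Gm_diff_cases:
  assumes "h \<in> Gm m"
  shows "(\<forall>x y. h x - h y = x - y) \<or> (\<forall>x y. h x - h y = y - x)"
  using Gm_normal_form[OF assms] by auto

lemma Gm_fixed_point_imp_id:
  assumes "h \<in> Gm m" and "h z = z"
  shows "h x = x"
proof -
  obtain c where "h = (\<lambda>x. x + 2 * c * (int m - 1)) \<or> h = (\<lambda>x. 2 * c * (int m - 1) + 1 - x)"
    using Gm_normal_form[OF assms(1)] by blast
  then show ?thesis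
  proof
    assume "h = (\<lambda>x. x + 2 * c * (int m - 1))"
    then show ?thesis using assms(2) by simp
  next
    assume "h = (\<lambda>x. 2 * c * (int m - 1) + 1 - x)"
    then have "2 * z = 2 * (c * (int m - 1)) + 1" using assms(2) by simp
    then show ?thesis by presburger
  qed
qed

lemma Gm_comp:
  assumes "h \<in> Gm m" and "h' \<in> Gm m"
  shows "h \<circ> h' \<in> Gm m"
  using assms(1)
proof induction
  case Gm_id
  show ?case using assms(2) by simp
next
  case (Gm_r1 g)
  show ?case unfolding comp_assoc by (rule Gm.Gm_r1[OF Gm_r1.IH])
next
  case (Gm_r2 g)
  show ?case unfolding comp_assoc by (rule Gm.Gm_r2[OF Gm_r2.IH])
qed

lemma Gm_inverse:
  assumes "h \<in> Gm m"
  obtains h' where "h' \<in> Gm m" and "\<And>x. h' (h x) = x"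
  using assms
proof (induction arbitrary: thesis)
  case Gm_id
  then show ?case using Gm.Gm_id by fastforce
next
  case (Gm_r1 g)
  obtain h' where h': "h' \<in> Gm m" "\<And>x. h' (g x) = x" using Gm_r1.IH by blast
  have "refl2 1 \<in> Gm m" using Gm.Gm_r1[OF Gm.Gm_id] by simp
  with h'(1) have "h' \<circ> refl2 1 \<in> Gm m" by (rule Gm_comp)
  then show ?case by (rule Gm_r1.prems) (simp add: refl2_def h'(2))
next
  case (Gm_r2 g)
  obtain h' where h': "h' \<in> Gm m" "\<And>x. h' (g x) = x" using Gm_r2.IH by blast
  have "refl2 (2 * int m - 1) \<in> Gm m" using Gm.Gm_r2[OF Gm.Gm_id] by simp
  with h'(1) have "h' \<circ> refl2 (2 * int m - 1) \<in> Gm m" by (rule Gm_comp)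
  then show ?case by (rule Gm_r2.prems) (simp add: refl2_def h'(2))
qed

lemma pair_rel_iff:
  "(p, q) \<in> pair_rel m P \<longleftrightarrow>
     p \<in> P \<and> q \<in> P \<and> (\<exists>h\<in>Gm m. {h (fst p), h (snd p)} = {fst q, snd q})"
  by (cases p; cases q) (simp add: pair_rel_def)

lemma equiv_pair_rel: "equiv P (pair_rel m P)"
proof (rule equivI)
  show "pair_rel m P \<subseteq> P \<times> P" by (auto simp: pair_rel_iff)
  show "refl_on P (pair_rel m P)"
    by (rule refl_onI) (auto simp: pair_rel_iff intro!: bexI[of _ id] Gm.Gm_id)
  show "sym (pair_rel m P)"
  proof (rule symI)
    fix p q assume "(p, q) \<in> pair_rel m P"
    then obtain h where pq: "p \<in> P" "q \<in> P" "h \<in> Gm m" "{h (fst p), h (snd p)} = {fst q, snd q}"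
      by (auto simp: pair_rel_iff)
    obtain h' where h': "h' \<in> Gm m" "\<And>x. h' (h x) = x" using Gm_inverse[OF pq(3)] by blast
    have "{h' (fst q), h' (snd q)} = h' ` {h (fst p), h (snd p)}" using pq(4) by simp
    also have "\<dots> = {fst p, snd p}" using h'(2) by simp
    finally show "(q, p) \<in> pair_rel m P" using pq h'(1) by (auto simp: pair_rel_iff)
  qed
  show "trans (pair_rel m P)"
  proof (rule transI)
    fix p q r assume "(p, q) \<in> pair_rel m P" "(q, r) \<in> pair_rel m P"
    then obtain h h' where
      pqr: "p \<in> P" "r \<in> P" "h \<in> Gm m" "h' \<in> Gm m"
        "{h (fst p), h (snd p)} = {fst q, snd q}" "{h' (fst q), h' (snd q)} = {fst r, snd r}"
      by (auto simp: pair_rel_iff)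
    have "{(h' \<circ> h) (fst p), (h' \<circ> h) (snd p)} = h' ` {h (fst p), h (snd p)}" by simp
    also have "\<dots> = {fst r, snd r}" using pqr(5,6) by simp
    finally show "(p, r) \<in> pair_rel m P"
      using pqr(1,2) Gm_comp[OF pqr(4,3)] unfolding pair_rel_iff by blast
  qed
qed

lemma quotient_pair_rel_eq:
  assumes "P \<subseteq> Q" and "pair_rel m Q `` P \<subseteq> P"
  shows "P // pair_rel m P = P // pair_rel m Q"
proof -
  have "pair_rel m P `` {p} = pair_rel m Q `` {p}" if "p \<in> P" for p
    using assms that by (auto simp: pair_rel_iff)
  then show ?thesis unfolding quotient_def by simp
qed

definition ordered_pairs :: "(int \<times> int) set" where
  "ordered_pairs = {(i, j). i < j}"

lemma crossing_pairs_subset_ordered_pairs: "crossing_pairs S f \<subseteq> ordered_pairs"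
  by (auto simp: crossing_pairs_def ordered_pairs_def)

lemma crossing_pairs_closed:
  assumes closed: "\<forall>h\<in>Gm m. \<forall>x\<in>S. h x \<in> S"
    and equivariant: "\<forall>h\<in>Gm m. \<forall>x\<in>S. f (h x) = h (f x)"
  shows "pair_rel m ordered_pairs `` crossing_pairs S f \<subseteq> crossing_pairs S f"
proof (rule subsetI, elim ImageE)
  fix q p assume "(p, q) \<in> pair_rel m ordered_pairs" and p: "p \<in> crossing_pairs S f"
  then obtain i j a b h where pq: "p = (i, j)" "q = (a, b)" "a < b"
    and h: "h \<in> Gm m" "{h i, h j} = {a, b}"
    by (cases p, cases q) (auto simp: pair_rel_iff ordered_pairs_def)
  have ij: "i \<in> S" "j \<in> S" "i < j" "f j < f i"
    using p pq(1) by (auto simp: crossing_pairs_def)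
  have hS: "h i \<in> S" "h j \<in> S" using closed h(1) ij by auto
  have hf: "f (h i) = h (f i)" "f (h j) = h (f j)" using equivariant h(1) ij by auto
  from Gm_diff_cases[OF h(1)] show "q \<in> crossing_pairs S f"
  proof
    assume "\<forall>x y. h x - h y = x - y"
    then have "h j - h i = j - i" "h (f i) - h (f j) = f i - f j" by blast+
    then have "h i < h j" "h (f j) < h (f i)" using ij by linarith+
    then have "a = h i" "b = h j" using h(2) pq(3) by (auto simp: doubleton_eq_iff)
    then show ?thesis using pq(2) hS hf \<open>h (f j) < h (f i)\<close> pq(3) by (simp add: crossing_pairs_def)
  next
    assume "\<forall>x y. h x - h y = y - x"
    then have "h i - h j = j - i" "h (f j) - h (f i) = f i - f j" by blast+
    then have "h j < h i" "h (f i) < h (f j)" using ij by linarith+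
    then have "a = h j" "b = h i" using h(2) pq(3) by (auto simp: doubleton_eq_iff)
    then show ?thesis using pq(2) hS hf \<open>h (f i) < h (f j)\<close> pq(3) by (simp add: crossing_pairs_def)
  qed
qed

lemma cr_eq_card_quotient:
  assumes "\<forall>h\<in>Gm m. \<forall>x\<in>S. h x \<in> S" and "\<forall>h\<in>Gm m. \<forall>x\<in>S. f (h x) = h (f x)"
  shows "cr m S f = card (crossing_pairs S f // pair_rel m ordered_pairs)"
  unfolding cr_def
  using quotient_pair_rel_eq[OF crossing_pairs_subset_ordered_pairs crossing_pairs_closed[OF assms]]
  by simp

lemma lpp_closed: "lpp m k S g \<Longrightarrow> \<forall>h\<in>Gm m. \<forall>x\<in>S. h x \<in> S"
  by (simp add: lpp_def)

lemma lpp_equivariant: "lpp m k S g \<Longrightarrow> \<forall>h\<in>Gm m. \<forall>x\<in>S. g (h x) = h (g x)"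
  by (simp add: lpp_def)

lemma lpp_comp_equivariant:
  assumes "lpp m k S g" and "lpp m k' T f" and "T = g ` S"
  shows "\<forall>h\<in>Gm m. \<forall>x\<in>S. (f \<circ> g) (h x) = h ((f \<circ> g) x)"
  using lpp_equivariant[OF assms(1)] lpp_equivariant[OF assms(2)] assms(3) by simp

lemma orbit_self: "x \<in> orbit m x"
  unfolding orbit_def by simp (metis Gm.Gm_id id_apply)

lemma lpp_inj_on:
  assumes "lpp m k S g"
  shows "inj_on g S"
proof (rule inj_onI)
  fix x y assume xy: "x \<in> S" "y \<in> S" "g x = g y"
  then have "orbit m x = orbit m y" using assms unfolding lpp_def by metis
  then obtain h where h: "h \<in> Gm m" "y = h x" using orbit_self[of y m] unfolding orbit_def by auto
  have "h (g x) = g x" using assms h xy unfolding lpp_def by metis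
  then have "h x = x" using Gm_fixed_point_imp_id[OF h(1)] by blast
  then show "x = y" using h by simp
qed

lemma lpp_orbit_representatives:
  assumes "lpp m k S g"
  obtains R where "finite R" and "\<And>x. x \<in> S \<Longrightarrow> \<exists>h\<in>Gm m. h x \<in> R"
proof -
  define rep where "rep x = (SOME y. y \<in> orbit m x)" for x
  have rep: "\<exists>h\<in>Gm m. rep x = h x" for x
  proof -
    have "rep x \<in> orbit m x" unfolding rep_def by (rule someI, rule orbit_self)
    then show ?thesis by (auto simp: orbit_def)
  qed
  have "finite (orbit m ` S)" using assms unfolding lpp_def by (elim conjE)
  then have "finite ((\<lambda>Ob. SOME y. y \<in> Ob) ` orbit m ` S)" by (rule finite_imageI)
  then have "finite (rep ` S)" unfolding rep_def image_image .
  moreover have "\<exists>h\<in>Gm m. h x \<in> rep ` S" if "x \<in> S" for x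
    using rep[of x] that by (metis imageI)
  ultimately show thesis using that by blast
qed

lemma lpp_displacement_bounded:
  assumes "lpp m k S g"
  obtains B where "\<And>x. x \<in> S \<Longrightarrow> \<bar>g x - x\<bar> \<le> B"
proof -
  obtain R where R: "finite R" "\<And>x. x \<in> S \<Longrightarrow> \<exists>h\<in>Gm m. h x \<in> R"
    using lpp_orbit_representatives[OF assms] by blast
  have "\<bar>g x - x\<bar> \<le> (\<Sum>y\<in>R. \<bar>g y - y\<bar>)" if x: "x \<in> S" for x
  proof -
    obtain h where h: "h \<in> Gm m" "h x \<in> R" using R(2)[OF x] by blast
    have "\<bar>g x - x\<bar> = \<bar>h (g x) - h x\<bar>"
      using Gm_diff_cases[OF h(1)] by (elim disjE) (simp_all add: abs_minus_commute)
    also have "\<dots> = \<bar>g (h x) - h x\<bar>" using lpp_equivariant[OF assms] h(1) x by simp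
    also have "\<dots> \<le> (\<Sum>y\<in>R. \<bar>g y - y\<bar>)" by (rule member_le_sum[OF h(2) _ R(1)]) simp
    finally show ?thesis .
  qed
  then show ?thesis by (rule that)
qed

lemma finite_crossing_classes:
  assumes "lpp m k S g"
  shows "finite (crossing_pairs S g // pair_rel m ordered_pairs)"
proof -
  define E where "E = pair_rel m ordered_pairs"
  have equiv: "equiv ordered_pairs E" unfolding E_def by (rule equiv_pair_rel)
  obtain R where R: "finite R" "\<And>x. x \<in> S \<Longrightarrow> \<exists>h\<in>Gm m. h x \<in> R"
    using lpp_orbit_representatives[OF assms] by blast
  obtain B where B: "\<And>x. x \<in> S \<Longrightarrow> \<bar>g x - x\<bar> \<le> B"
    using lpp_displacement_bounded[OF assms] by blast
  define W where "W = (\<Union>r\<in>R. {r - 2 * B .. r + 2 * B})"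
  \<comment> \<open>Crossings have width at most \<open>2 B\<close>; moving the left end into \<open>R\<close>
    puts a representative into \<open>W \<times> W\<close>.\<close>
  have "crossing_pairs S g // E \<subseteq> (\<lambda>q. E `` {q}) ` (W \<times> W)"
  proof
    fix X assume "X \<in> crossing_pairs S g // E"
    then obtain i j where X: "X = E `` {(i, j)}" and ij: "i \<in> S" "j \<in> S" "i < j" "g j < g i"
      by (auto elim!: quotientE simp: crossing_pairs_def)
    have short: "j - i \<le> 2 * B" using B[OF ij(1)] B[OF ij(2)] ij(4) by linarith
    obtain h where h: "h \<in> Gm m" "h i \<in> R" using R(2)[OF ij(1)] by blast
    have dist: "\<bar>h j - h i\<bar> = j - i" using Gm_diff_cases[OF h(1)] ij(3) by (elim disjE) auto
    define q where "q = (min (h i) (h j), max (h i) (h j))"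
    have "{h i, h j} = {fst q, snd q}" unfolding q_def by (auto simp: min_def max_def)
    moreover have "q \<in> ordered_pairs" using dist ij(3) unfolding q_def ordered_pairs_def by auto
    ultimately have "((i, j), q) \<in> E"
      using h(1) ij(3) unfolding E_def pair_rel_iff ordered_pairs_def by auto
    then have "X = E `` {q}" unfolding X by (rule equiv_class_eq[OF equiv])
    moreover have "q \<in> W \<times> W"
    proof -
      have "{h i - 2 * B .. h i + 2 * B} \<subseteq> W" using h(2) unfolding W_def by blast
      moreover have "fst q \<in> {h i - 2 * B .. h i + 2 * B}" "snd q \<in> {h i - 2 * B .. h i + 2 * B}"
        using dist short unfolding q_def by auto
      ultimately show ?thesis by (simp add: mem_Times_iff subset_iff)
    qed
    ultimately show "X \<in> (\<lambda>q. E `` {q}) ` (W \<times> W)" by blast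
  qed
  moreover have "finite W" unfolding W_def using R(1) by blast
  ultimately show ?thesis unfolding E_def by (simp add: finite_subset)
qed

lemma lpp_pair_rel_reflect:
  assumes lg: "lpp m k S g"
    and p: "p \<in> ordered_pairs" "fst p \<in> S" "snd p \<in> S"
    and q: "q \<in> ordered_pairs" "fst q \<in> S" "snd q \<in> S"
    and gpq: "(map_prod g g p, map_prod g g q) \<in> pair_rel m ordered_pairs"
  shows "(p, q) \<in> pair_rel m ordered_pairs"
proof -
  obtain h where h: "h \<in> Gm m" "{h (g (fst p)), h (g (snd p))} = {g (fst q), g (snd q)}"
    using gpq by (auto simp: pair_rel_iff map_prod_def split_beta)
  have hS: "h (fst p) \<in> S" "h (snd p) \<in> S" using lpp_closed[OF lg] h(1) p by auto
  have "g ` {h (fst p), h (snd p)} = g ` {fst q, snd q}"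
    using h lpp_equivariant[OF lg] p by auto
  moreover have "{h (fst p), h (snd p)} \<subseteq> S" "{fst q, snd q} \<subseteq> S" using hS q by auto
  ultimately have "{h (fst p), h (snd p)} = {fst q, snd q}"
    using inj_on_image_eq_iff[OF lpp_inj_on[OF lg]] by blast
  then show ?thesis using h(1) p(1) q(1) by (auto simp: pair_rel_iff)
qed

lemma card_classes_comp_crossings_diff_le:
  assumes lg: "lpp m k S g" and lf: "lpp m k' T f" and T: "T = g ` S"
  shows "card ((crossing_pairs S (f \<circ> g) - crossing_pairs S g) // pair_rel m ordered_pairs)
           \<le> card (crossing_pairs T f // pair_rel m ordered_pairs)"
proof -
  define E where "E = pair_rel m ordered_pairs"
  define A where "A = crossing_pairs S (f \<circ> g) - crossing_pairs S g"
  have equiv: "equiv ordered_pairs E" unfolding E_def by (rule equiv_pair_rel)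
  have A: "fst p \<in> S" "snd p \<in> S" "p \<in> ordered_pairs" if "p \<in> A" for p
    using that by (auto simp: A_def crossing_pairs_def ordered_pairs_def)
  have "map_prod g g p \<in> crossing_pairs T f" if "p \<in> A" for p
  proof -
    obtain i j where "p = (i, j)" "i \<in> S" "j \<in> S" "i < j" "f (g j) < f (g i)" "\<not> g j < g i"
      using \<open>p \<in> A\<close> by (cases p) (auto simp: A_def crossing_pairs_def)
    moreover from this have "g i \<noteq> g j" by auto
    ultimately show ?thesis using T by (auto simp: crossing_pairs_def)
  qed
  then have image: "(\<lambda>p. E `` {map_prod g g p}) ` A \<subseteq> crossing_pairs T f // E"
    by (auto intro: quotientI)
  have fin: "finite (crossing_pairs T f // E)"
    unfolding E_def by (rule finite_crossing_classes[OF lf])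
  have factors: "E `` {p} = E `` {q}"
    if "p \<in> A" "q \<in> A" "E `` {map_prod g g p} = E `` {map_prod g g q}" for p q
  proof -
    have "map_prod g g p \<in> ordered_pairs" "map_prod g g q \<in> ordered_pairs"
      using \<open>\<And>p. p \<in> A \<Longrightarrow> map_prod g g p \<in> crossing_pairs T f\<close> that(1,2)
        crossing_pairs_subset_ordered_pairs by blast+
    then have "(map_prod g g p, map_prod g g q) \<in> E"
      using that(3) eq_equiv_class_iff[OF equiv] by blast
    then have "(p, q) \<in> E"
      unfolding E_def using lpp_pair_rel_reflect[OF lg] A that(1,2) by blast
    then show ?thesis by (rule equiv_class_eq[OF equiv])
  qed
  have "card ((\<lambda>p. E `` {p}) ` A) \<le> card ((\<lambda>p. E `` {map_prod g g p}) ` A)"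
    by (rule card_image_le_if_factors[of "\<lambda>p. E `` {map_prod g g p}" A "\<lambda>p. E `` {p}"])
      (use finite_subset[OF image fin] in simp, rule factors)
  also have "\<dots> \<le> card (crossing_pairs T f // E)" using image fin by (rule card_mono[rotated])
  finally show ?thesis unfolding A_def E_def quotient_eq_image .
qed

lemma cr_comp_less:
  assumes lg: "lpp m k S g" and lf: "lpp m k' T f" and T: "T = g ` S"
    and p0: "p0 \<in> crossing_pairs S g" "p0 \<notin> crossing_pairs S (f \<circ> g)"
  shows "cr m S (f \<circ> g) < cr m T f + cr m S g"
proof -
  define E where "E = pair_rel m ordered_pairs"
  define P where "P = crossing_pairs S (f \<circ> g)"
  define Pg where "Pg = crossing_pairs S g"
  define Pf where "Pf = crossing_pairs T f"
  have equiv: "equiv ordered_pairs E" unfolding E_def by (rule equiv_pair_rel)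
  note equivariant_fg = lpp_comp_equivariant[OF lg lf T]
  have P_closed: "E `` P \<subseteq> P"
    unfolding E_def P_def by (rule crossing_pairs_closed[OF lpp_closed[OF lg] equivariant_fg])
  have cr_fg: "cr m S (f \<circ> g) = card (P // E)"
    unfolding E_def P_def by (rule cr_eq_card_quotient[OF lpp_closed[OF lg] equivariant_fg])
  have cr_g: "cr m S g = card (Pg // E)"
    unfolding E_def Pg_def by (rule cr_eq_card_quotient[OF lpp_closed[OF lg] lpp_equivariant[OF lg]])
  have cr_f: "cr m T f = card (Pf // E)"
    unfolding E_def Pf_def by (rule cr_eq_card_quotient[OF lpp_closed[OF lf] lpp_equivariant[OF lf]])
  have fin_g: "finite (Pg // E)" unfolding E_def Pg_def by (rule finite_crossing_classes[OF lg])
  have p0_class: "E `` {p0} \<in> Pg // E" using p0(1) unfolding Pg_def by (rule quotientI)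
  have "(P \<inter> Pg) // E \<subseteq> Pg // E - {E `` {p0}}"
  proof
    fix X assume "X \<in> (P \<inter> Pg) // E"
    then obtain p where X: "X = E `` {p}" and p: "p \<in> P" "p \<in> Pg" by (auto elim: quotientE)
    have "p0 \<in> E `` {p0}"
      by (rule equiv_class_self[OF equiv]) (use p0(1) crossing_pairs_subset_ordered_pairs in blast)
    moreover have "E `` {p} \<subseteq> P" using P_closed p(1) by blast
    ultimately have "X \<noteq> E `` {p0}" using p0(2) X unfolding P_def by blast
    then show "X \<in> Pg // E - {E `` {p0}}" using X p(2) by (auto intro: quotientI)
  qed
  then have "card ((P \<inter> Pg) // E) \<le> card (Pg // E - {E `` {p0}})"
    using fin_g by (intro card_mono) simp_all
  also have "\<dots> < card (Pg // E)" using fin_g p0_class by (rule card_Diff1_less)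
  finally have less_g: "card ((P \<inter> Pg) // E) < card (Pg // E)" .
  have le_f: "card ((P - Pg) // E) \<le> card (Pf // E)"
    unfolding E_def P_def Pg_def Pf_def by (rule card_classes_comp_crossings_diff_le[OF lg lf T])
  have "P // E = (P \<inter> Pg) // E \<union> (P - Pg) // E" unfolding quotient_def by blast
  then have "card (P // E) \<le> card ((P \<inter> Pg) // E) + card ((P - Pg) // E)"
    by (simp add: card_Un_le)
  with less_g le_f show ?thesis unfolding cr_fg cr_g cr_f by linarith
qed

lemma crossing_pairs_subset_if_cr_additive:
  assumes "lpp m k S g" and "lpp m k' T f" and "T = g ` S"
    and "cr m S (f \<circ> g) = cr m T f + cr m S g"
  shows "crossing_pairs S g \<subseteq> crossing_pairs S (f \<circ> g)"
proof
  fix p assume p: "p \<in> crossing_pairs S g"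
  show "p \<in> crossing_pairs S (f \<circ> g)"
  proof (rule ccontr)
    assume "p \<notin> crossing_pairs S (f \<circ> g)"
    from cr_comp_less[OF assms(1-3) p this] assms(4) show False by simp
  qed
qed

definition boundary_crossers :: "int set \<Rightarrow> (int \<Rightarrow> int) \<Rightarrow> int \<Rightarrow> int set" where
  "boundary_crossers S f w = {i \<in> S. (w \<le> i) \<noteq> (w \<le> f i)}"

lemma weight_eq_card_boundary_crossers:
  "weight S f w = card (boundary_crossers S f w) / 2"
proof -
  have below: "real_of_int a < real_of_int w - 1/2 \<longleftrightarrow> a < w" for a
    using int_less_real_le[of a w] by linarith
  have above: "real_of_int w - 1/2 < real_of_int a \<longleftrightarrow> w \<le> a" for a
    using int_less_real_le[of a w] by linarith
  show ?thesis
    unfolding weight_def boundary_crossers_def below above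
    by (intro arg_cong[where f = "\<lambda>A. real (card A) / 2"]) auto
qed

lemma finite_boundary_crossers:
  assumes "lpp m k S g"
  shows "finite (boundary_crossers S g w)"
proof -
  obtain B where B: "\<And>x. x \<in> S \<Longrightarrow> \<bar>g x - x\<bar> \<le> B"
    using lpp_displacement_bounded[OF assms] by blast
  have "boundary_crossers S g w \<subseteq> {w - B .. w + B}"
  proof
    fix i assume "i \<in> boundary_crossers S g w"
    then have "i \<in> S" "(w \<le> i) \<noteq> (w \<le> g i)" by (simp_all add: boundary_crossers_def)
    with B[of i] show "i \<in> {w - B .. w + B}" by auto
  qed
  then show ?thesis by (rule finite_subset) simp
qed

lemma boundary_crossed_at_most_once:
  assumes lg: "lpp m k S g" and lf: "lpp m k' T f" and T: "T = g ` S"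
    and sub: "crossing_pairs S g \<subseteq> crossing_pairs S (f \<circ> g)"
    and refl: "refl2 (2 * w - 1) \<in> Gm m"
    and i: "i \<in> boundary_crossers S g w"
  shows "g i \<notin> boundary_crossers T f w"
proof
  assume gi: "g i \<in> boundary_crossers T f w"
  let ?r = "refl2 (2 * w - 1)"
  have r_flip: "x < w \<longleftrightarrow> w \<le> ?r x" for x unfolding refl2_def by linarith
  have r_S: "?r x \<in> S" if "x \<in> S" for x using lpp_closed[OF lg] refl that by blast
  have r_g: "g (?r x) = ?r (g x)" if "x \<in> S" for x using lpp_equivariant[OF lg] refl that by blast
  have r_fg: "f (g (?r x)) = ?r (f (g x))" if "x \<in> S" for x
    using lpp_equivariant[OF lf] refl that r_g[OF that] T by simp
  have iS: "i \<in> S" and flips: "(w \<le> i) \<noteq> (w \<le> g i)" "(w \<le> g i) \<noteq> (w \<le> f (g i))"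
    using i gi by (simp_all add: boundary_crossers_def)
  obtain i' where i': "i' \<in> S" "i' < w" "w \<le> g i'" "f (g i') < w"
  proof (cases "w \<le> i")
    case True
    with flips have "?r i < w" "w \<le> g (?r i)" "f (g (?r i)) < w"
      using r_flip r_g[OF iS] r_fg[OF iS] by (metis not_le)+
    then show ?thesis using that r_S[OF iS] by blast
  next
    case False
    with flips show ?thesis using that iS by auto
  qed
  have "i' < ?r i'" "g (?r i') < g i'" "f (g i') < f (g (?r i'))"
    using i' r_g[OF i'(1)] r_fg[OF i'(1)] by (simp_all add: refl2_def)
  then have "(i', ?r i') \<in> crossing_pairs S g" "(i', ?r i') \<notin> crossing_pairs S (f \<circ> g)"
    using i'(1) r_S[OF i'(1)] by (simp_all add: crossing_pairs_def)
  then show False using sub by blast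
qed

lemma weight_comp_additive:
  assumes lg: "lpp m k S g" and lf: "lpp m k' T f" and T: "T = g ` S"
    and cr: "cr m S (f \<circ> g) = cr m T f + cr m S g"
    and refl: "refl2 (2 * w - 1) \<in> Gm m"
  shows "weight S (f \<circ> g) w = weight T f w + weight S g w"
proof -
  define Y where "Y = {i \<in> S. g i \<in> boundary_crossers T f w}"
  have once: "g i \<notin> boundary_crossers T f w" if "i \<in> boundary_crossers S g w" for i
    using boundary_crossed_at_most_once[OF lg lf T
        crossing_pairs_subset_if_cr_additive[OF lg lf T cr] refl that] .
  have split: "boundary_crossers S (f \<circ> g) w = boundary_crossers S g w \<union> Y"
    using once T by (auto simp: boundary_crossers_def Y_def)
  have disjoint: "boundary_crossers S g w \<inter> Y = {}" using once by (auto simp: Y_def)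
  have "g ` Y = boundary_crossers T f w"
    using T by (auto simp: Y_def boundary_crossers_def)
  moreover have "inj_on g Y" using lpp_inj_on[OF lg] by (rule inj_on_subset) (simp add: Y_def)
  ultimately have bij: "bij_betw g Y (boundary_crossers T f w)" by (simp add: bij_betw_def)
  then have "finite Y" using finite_boundary_crossers[OF lf] by (simp add: bij_betw_finite)
  then have "card (boundary_crossers S (f \<circ> g) w)
      = card (boundary_crossers S g w) + card (boundary_crossers T f w)"
    unfolding split using finite_boundary_crossers[OF lg] disjoint bij_betw_same_card[OF bij]
    by (simp add: card_Un_disjoint)
  then show ?thesis unfolding weight_eq_card_boundary_crossers by simp
qed

theorem mainTheorem2:
  fixes k m :: nat and S T :: "int set" and f g :: "int \<Rightarrow> int"
  assumes "0 < k" and "k < m"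
    and "lpp m k S g" and "lpp m k T f"
    and "T = g ` S"
    and "cr m S (f \<circ> g) = cr m T f + cr m S g"
  shows "weight S (f \<circ> g) 1 = weight T f 1 + weight S g 1
       \<and> weight S (f \<circ> g) (int m) = weight T f (int m) + weight S g (int m)"
proof -
  have "refl2 (2 * 1 - 1) \<in> Gm m" using Gm.Gm_r1[OF Gm.Gm_id] by simp
  moreover have "refl2 (2 * int m - 1) \<in> Gm m" using Gm.Gm_r2[OF Gm.Gm_id] by simp
  ultimately show ?thesis using weight_comp_additive[OF assms(3-6)] by blast
qed

end
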